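(* Let $\Delta$ be an irreducible reduced root system with positive roots $\Delta^+$ and simple roots $\Pi$, partially ordered by $\mu\preccurlyeq\nu$ iff $\nu-\mu$ is a non-negative integral linear combination of simple roots. 1) For any $\gamma\in\Delta^+$, the subposet $\{\nu\in\Delta^+\mid \nu\succcurlyeq\gamma\}$ is a modular lattice. 2) For $\gamma_1,\gamma_2\in\Delta^+$, the greatest lower bound $\gamma_1\wedge\gamma_2$ exists in $(\Delta^+,\preccurlyeq)$ if and only if $\mathrm{supp}(\gamma_1)\cap\mathrm{supp}(\gamma_2)\neq\varnothing$. In this case, writing $\gamma_i=\sum_{\alpha\in\Pi}c_{i\alpha}\alpha$, one has $\gamma_1\wedge\gamma_2=\sum_{\alpha\in\Pi}\min\{c_{1\alpha},c_{2\alpha}\}\alpha$.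
   Context: For $\mu=\sum_{\alpha\in\Pi}c_\alpha\alpha$, $\mathrm{supp}(\mu)=\{\alpha\in\Pi\mid c_\alpha\neq 0\}$. The greatest lower bound (meet) of $\gamma_1,\gamma_2$ is a positive root $\nu$ with $\nu\preccurlyeq\gamma_1,\gamma_2$ such that every positive root $\kappa$ with $\kappa\preccurlyeq\gamma_1,\gamma_2$ satisfies $\kappa\preccurlyeq\nu$. *)

theory Defs
  imports "HOL-Analysis.Analysis"
begin

definition cartan_int :: "'a::euclidean_space \<Rightarrow> 'a \<Rightarrow> real" where
  "cartan_int \<beta> \<alpha> = 2 * (\<beta> \<bullet> \<alpha>) / (\<alpha> \<bullet> \<alpha>)"

definition root_system :: "'a::euclidean_space set \<Rightarrow> bool" where
  "root_system R \<longleftrightarrow> finite R \<and> 0 \<notin> R \<and> span R = UNIV \<and>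
     (\<forall>\<alpha>\<in>R. \<forall>\<beta>\<in>R. \<beta> - cartan_int \<beta> \<alpha> *\<^sub>R \<alpha> \<in> R \<and> cartan_int \<beta> \<alpha> \<in> \<int>)"

definition reduced_root_system :: "'a::euclidean_space set \<Rightarrow> bool" where
  "reduced_root_system R \<longleftrightarrow> (\<forall>\<alpha>\<in>R. \<forall>c::real. c *\<^sub>R \<alpha> \<in> R \<longrightarrow> c = 1 \<or> c = -1)"

definition irreducible_root_system :: "'a::euclidean_space set \<Rightarrow> bool" where
  "irreducible_root_system R \<longleftrightarrow> R \<noteq> {} \<and>
     \<not> (\<exists>A B. A \<union> B = R \<and> A \<inter> B = {} \<and> A \<noteq> {} \<and> B \<noteq> {} \<and>
            (\<forall>a\<in>A. \<forall>b\<in>B. a \<bullet> b = 0))"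

definition is_base :: "'a::euclidean_space set \<Rightarrow> 'a set \<Rightarrow> bool" where
  "is_base R P \<longleftrightarrow> P \<subseteq> R \<and> independent P \<and>
     (\<forall>\<beta>\<in>R. \<exists>c::'a \<Rightarrow> int. \<beta> = (\<Sum>\<alpha>\<in>P. of_int (c \<alpha>) *\<^sub>R \<alpha>) \<and>
                 ((\<forall>\<alpha>\<in>P. c \<alpha> \<ge> 0) \<or> (\<forall>\<alpha>\<in>P. c \<alpha> \<le> 0)))"

definition nat_comb :: "'a::euclidean_space set \<Rightarrow> 'a \<Rightarrow> bool" where
  "nat_comb P v \<longleftrightarrow> (\<exists>c::'a \<Rightarrow> nat. v = (\<Sum>\<alpha>\<in>P. of_nat (c \<alpha>) *\<^sub>R \<alpha>))"

definition pos_roots :: "'a::euclidean_space set \<Rightarrow> 'a set \<Rightarrow> 'a set" where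
  "pos_roots R P = {\<beta>\<in>R. nat_comb P \<beta>}"

definition root_le :: "'a::euclidean_space set \<Rightarrow> 'a \<Rightarrow> 'a \<Rightarrow> bool" where
  "root_le P \<mu> \<nu> \<longleftrightarrow> nat_comb P (\<nu> - \<mu>)"

definition root_coeff :: "'a::euclidean_space set \<Rightarrow> 'a \<Rightarrow> 'a \<Rightarrow> real" where
  "root_coeff P \<mu> \<alpha> = representation P \<mu> \<alpha>"

definition root_supp :: "'a::euclidean_space set \<Rightarrow> 'a \<Rightarrow> 'a set" where
  "root_supp P \<mu> = {\<alpha>\<in>P. root_coeff P \<mu> \<alpha> \<noteq> 0}"

definition is_meet_in :: "('b \<Rightarrow> 'b \<Rightarrow> bool) \<Rightarrow> 'b set \<Rightarrow> 'b \<Rightarrow> 'b \<Rightarrow> 'b \<Rightarrow> bool" where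
  "is_meet_in le S x y z \<longleftrightarrow> z \<in> S \<and> le z x \<and> le z y \<and>
     (\<forall>w\<in>S. le w x \<and> le w y \<longrightarrow> le w z)"

definition is_join_in :: "('b \<Rightarrow> 'b \<Rightarrow> bool) \<Rightarrow> 'b set \<Rightarrow> 'b \<Rightarrow> 'b \<Rightarrow> 'b \<Rightarrow> bool" where
  "is_join_in le S x y z \<longleftrightarrow> z \<in> S \<and> le x z \<and> le y z \<and>
     (\<forall>w\<in>S. le x w \<and> le y w \<longrightarrow> le z w)"

definition is_lattice_on :: "('b \<Rightarrow> 'b \<Rightarrow> bool) \<Rightarrow> 'b set \<Rightarrow> bool" where
  "is_lattice_on le S \<longleftrightarrow> (\<forall>x\<in>S. \<forall>y\<in>S. (\<exists>z. is_meet_in le S x y z) \<and> (\<exists>z. is_join_in le S x y z))"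

definition is_modular_lattice_on :: "('b \<Rightarrow> 'b \<Rightarrow> bool) \<Rightarrow> 'b set \<Rightarrow> bool" where
  "is_modular_lattice_on le S \<longleftrightarrow> is_lattice_on le S \<and>
     (\<forall>a\<in>S. \<forall>b\<in>S. \<forall>c\<in>S. le a c \<longrightarrow>
        (\<forall>m l j r. is_meet_in le S b c m \<and> is_join_in le S a m l \<and>
                   is_join_in le S a b j \<and> is_meet_in le S j c r \<longrightarrow> l = r))"

end

theory Submission
  imports Defs
begin

(* Positive roots are identified with their integer coefficient vectors, and root_le becomes the
   pointwise order on them. Both parts then reduce to one fact: if two positive roots share a simple
   root in their supports, the pointwise minimum and maximum of their coefficient vectors are again
   roots. If the two roots are incomparable their inner product is non-positive (otherwise their
   difference would be a root with coefficients of both signs), and a short computation with this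
   and the obtuseness of simple roots yields a simple root along which one of them can be moved one
   step towards the other without leaving R and without changing the pointwise minimum; induction on
   the l1-distance gives the minimum, and the same argument for the negatives gives the maximum. *)

section \<open>Subposets ordered by coefficients\<close>

locale pointwise_embedding =
  fixes le :: "'b \<Rightarrow> 'b \<Rightarrow> bool" and S :: "'b set"
    and I :: "'i set" and f :: "'b \<Rightarrow> 'i \<Rightarrow> 'c::linorder"
  assumes le_iff: "x \<in> S \<Longrightarrow> y \<in> S \<Longrightarrow> le x y \<longleftrightarrow> (\<forall>i\<in>I. f x i \<le> f y i)"
begin

lemma is_meet_in_pointwise_min:
  assumes "x \<in> S" "y \<in> S" "z \<in> S" "\<forall>i\<in>I. f z i = min (f x i) (f y i)"
  shows "is_meet_in le S x y z"
  using assms unfolding is_meet_in_def by (auto simp: le_iff)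

lemma is_join_in_pointwise_max:
  assumes "x \<in> S" "y \<in> S" "z \<in> S" "\<forall>i\<in>I. f z i = max (f x i) (f y i)"
  shows "is_join_in le S x y z"
  using assms unfolding is_join_in_def by (auto simp: le_iff)

lemma is_meet_in_iff_pointwise_min:
  assumes "x \<in> S" "y \<in> S" and inf: "\<exists>z\<in>S. \<forall>i\<in>I. f z i = min (f x i) (f y i)"
  shows "is_meet_in le S x y m \<longleftrightarrow> m \<in> S \<and> (\<forall>i\<in>I. f m i = min (f x i) (f y i))"
proof
  obtain z where z: "z \<in> S" "\<forall>i\<in>I. f z i = min (f x i) (f y i)" using inf by blast
  assume m: "is_meet_in le S x y m"
  moreover have "is_meet_in le S x y z" using is_meet_in_pointwise_min assms(1,2) z by blast
  ultimately have "m \<in> S" "le m z" "le z m" unfolding is_meet_in_def by blast+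
  then have "\<forall>i\<in>I. f m i = f z i" using z le_iff by (meson order_antisym)
  then show "m \<in> S \<and> (\<forall>i\<in>I. f m i = min (f x i) (f y i))" using \<open>m \<in> S\<close> z by auto
qed (use is_meet_in_pointwise_min assms(1,2) in blast)

lemma is_join_in_iff_pointwise_max:
  assumes "x \<in> S" "y \<in> S" and sup: "\<exists>z\<in>S. \<forall>i\<in>I. f z i = max (f x i) (f y i)"
  shows "is_join_in le S x y m \<longleftrightarrow> m \<in> S \<and> (\<forall>i\<in>I. f m i = max (f x i) (f y i))"
proof
  obtain z where z: "z \<in> S" "\<forall>i\<in>I. f z i = max (f x i) (f y i)" using sup by blast
  assume m: "is_join_in le S x y m"
  moreover have "is_join_in le S x y z" using is_join_in_pointwise_max assms(1,2) z by blast
  ultimately have "m \<in> S" "le m z" "le z m" unfolding is_join_in_def by blast+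
  then have "\<forall>i\<in>I. f m i = f z i" using z le_iff by (meson order_antisym)
  then show "m \<in> S \<and> (\<forall>i\<in>I. f m i = max (f x i) (f y i))" using \<open>m \<in> S\<close> z by auto
qed (use is_join_in_pointwise_max assms(1,2) in blast)

lemma is_modular_lattice_on_pointwise:
  assumes antisym: "\<And>x y. x \<in> S \<Longrightarrow> y \<in> S \<Longrightarrow> le x y \<Longrightarrow> le y x \<Longrightarrow> x = y"
    and inf: "\<And>x y. x \<in> S \<Longrightarrow> y \<in> S \<Longrightarrow> \<exists>z\<in>S. \<forall>i\<in>I. f z i = min (f x i) (f y i)"
    and sup: "\<And>x y. x \<in> S \<Longrightarrow> y \<in> S \<Longrightarrow> \<exists>z\<in>S. \<forall>i\<in>I. f z i = max (f x i) (f y i)"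
  shows "is_modular_lattice_on le S"
  unfolding is_modular_lattice_on_def
proof (intro conjI ballI allI impI)
  show "is_lattice_on le S"
    unfolding is_lattice_on_def
  proof (intro ballI conjI)
    fix x y assume xy: "x \<in> S" "y \<in> S"
    show "\<exists>z. is_meet_in le S x y z"
      using inf[OF xy] is_meet_in_pointwise_min[OF xy] by blast
    show "\<exists>z. is_join_in le S x y z"
      using sup[OF xy] is_join_in_pointwise_max[OF xy] by blast
  qed
next
  fix a b c m l j r
  assume S: "a \<in> S" "b \<in> S" "c \<in> S" and "le a c"
    and "is_meet_in le S b c m \<and> is_join_in le S a m l \<and>
      is_join_in le S a b j \<and> is_meet_in le S j c r"
  then have m: "is_meet_in le S b c m" and l: "is_join_in le S a m l"
    and j: "is_join_in le S a b j" and r: "is_meet_in le S j c r" by blast+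
  have m': "m \<in> S" "\<forall>i\<in>I. f m i = min (f b i) (f c i)"
    using is_meet_in_iff_pointwise_min[OF S(2,3) inf[OF S(2,3)]] m by blast+
  have j': "j \<in> S" "\<forall>i\<in>I. f j i = max (f a i) (f b i)"
    using is_join_in_iff_pointwise_max[OF S(1,2) sup[OF S(1,2)]] j by blast+
  have l': "l \<in> S" "\<forall>i\<in>I. f l i = max (f a i) (f m i)"
    using is_join_in_iff_pointwise_max[OF S(1) m'(1) sup[OF S(1) m'(1)]] l by blast+
  have r': "r \<in> S" "\<forall>i\<in>I. f r i = min (f j i) (f c i)"
    using is_meet_in_iff_pointwise_min[OF j'(1) S(3) inf[OF j'(1) S(3)]] r by blast+
  have "f l i = f r i" if "i \<in> I" for i
  proof -
    have "f a i \<le> f c i" using le_iff[OF S(1,3)] \<open>le a c\<close> \<open>i \<in> I\<close> by blast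
    then show ?thesis using m'(2) j'(2) l'(2) r'(2) \<open>i \<in> I\<close> by (auto simp: min_def max_def)
  qed
  then have "le l r" "le r l" using le_iff[OF l'(1) r'(1)] le_iff[OF r'(1) l'(1)] by auto
  then show "l = r" using antisym l'(1) r'(1) by blast
qed

end

section \<open>Closure under pointwise minimum and maximum by unit steps\<close>

lemma min_closed_by_descent:
  fixes S :: "('i \<Rightarrow> int) \<Rightarrow> bool"
  assumes "finite I"
    and S_cong: "\<And>k k'. S k \<Longrightarrow> \<forall>i\<in>I. k' i = k i \<Longrightarrow> S k'"
    and descent: "\<And>k l. S k \<Longrightarrow> S l \<Longrightarrow> \<exists>i\<in>I. l i < k i \<Longrightarrow> \<exists>i\<in>I. k i < l i \<Longrightarrow>
      \<exists>i\<in>I. l i < k i \<and> S (k(i := k i - 1)) \<or> k i < l i \<and> S (l(i := l i - 1))"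
    and "S k" "S l"
  shows "S (\<lambda>i. min (k i) (l i))"
  using \<open>S k\<close> \<open>S l\<close>
proof (induction "nat (\<Sum>i\<in>I. \<bar>k i - l i\<bar>)" arbitrary: k l rule: less_induct)
  case less
  let ?dist = "\<lambda>k l. \<Sum>i\<in>I. \<bar>k i - l i\<bar>"
  have closer: "S (\<lambda>i. min (k i) (l i))"
    if "S k'" "S l'" "?dist k' l' < ?dist k l"
      and "(\<lambda>i. min (k' i) (l' i)) = (\<lambda>i. min (k i) (l i))" for k' l'
  proof -
    have "nat (?dist k' l') < nat (?dist k l)"
      using that(3) by (subst nat_less_eq_zless) (auto intro: sum_nonneg)
    then show ?thesis using less.hyps that(1,2,4) by metis
  qed
  consider "\<forall>i\<in>I. k i \<le> l i" | "\<forall>i\<in>I. l i \<le> k i"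
    | i where "i \<in> I" "l i < k i" "S (k(i := k i - 1))"
    | i where "i \<in> I" "k i < l i" "S (l(i := l i - 1))"
    using descent[OF less.prems] by (meson not_le)
  then show ?case
  proof cases
    case 1
    then show ?thesis using S_cong[OF \<open>S k\<close>] by simp
  next
    case 2
    then show ?thesis using S_cong[OF \<open>S l\<close>] by simp
  next
    case (3 i)
    show ?thesis
    proof (rule closer[OF 3(3) \<open>S l\<close>])
      show "?dist (k(i := k i - 1)) l < ?dist k l"
        using 3 by (intro sum_strict_mono_ex1[OF \<open>finite I\<close>]) auto
      show "(\<lambda>j. min ((k(i := k i - 1)) j) (l j)) = (\<lambda>j. min (k j) (l j))"
        using 3 by (auto simp: fun_eq_iff)
    qed
  next
    case (4 i)
    show ?thesis
    proof (rule closer[OF \<open>S k\<close> 4(3)])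
      show "?dist k (l(i := l i - 1)) < ?dist k l"
        using 4 by (intro sum_strict_mono_ex1[OF \<open>finite I\<close>]) auto
      show "(\<lambda>j. min (k j) ((l(i := l i - 1)) j)) = (\<lambda>j. min (k j) (l j))"
        using 4 by (auto simp: fun_eq_iff)
    qed
  qed
qed

lemma max_closed_by_ascent:
  fixes S :: "('i \<Rightarrow> int) \<Rightarrow> bool"
  assumes "finite I"
    and S_cong: "\<And>k k'. S k \<Longrightarrow> \<forall>i\<in>I. k' i = k i \<Longrightarrow> S k'"
    and ascent: "\<And>k l. S k \<Longrightarrow> S l \<Longrightarrow> \<exists>i\<in>I. l i < k i \<Longrightarrow> \<exists>i\<in>I. k i < l i \<Longrightarrow>
      \<exists>i\<in>I. k i < l i \<and> S (k(i := k i + 1)) \<or> l i < k i \<and> S (l(i := l i + 1))"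
    and "S k" "S l"
  shows "S (\<lambda>i. max (k i) (l i))"
proof -
  let ?S = "\<lambda>k. S (\<lambda>i. - k i)"
  have neg_update: "(\<lambda>j. - (k(i := k i - 1)) j) = (\<lambda>j. - k j)(i := - k i + 1)"
    for k :: "'i \<Rightarrow> int" and i
    by (auto simp: fun_eq_iff)
  have "?S (\<lambda>i. min (- k i) (- l i))"
  proof (rule min_closed_by_descent[where I = I])
    show "?S k'" if "?S k" "\<forall>i\<in>I. k' i = k i" for k k'
      using S_cong that by auto
    show "\<exists>i\<in>I. l i < k i \<and> ?S (k(i := k i - 1)) \<or> k i < l i \<and> ?S (l(i := l i - 1))"
      if "?S k" "?S l" "\<exists>i\<in>I. l i < k i" "\<exists>i\<in>I. k i < l i" for k l
      using ascent[OF that(1,2)] that(3,4) unfolding neg_update by auto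
  qed (use assms in auto)
  then show ?thesis by (simp flip: minus_max_eq_min)
qed

section \<open>Integral combinations of simple roots\<close>

definition int_comb :: "'a::real_vector set \<Rightarrow> ('a \<Rightarrow> int) \<Rightarrow> 'a" where
  "int_comb P k = (\<Sum>\<alpha>\<in>P. of_int (k \<alpha>) *\<^sub>R \<alpha>)"

lemma int_comb_cong: "(\<And>\<alpha>. \<alpha> \<in> P \<Longrightarrow> k \<alpha> = l \<alpha>) \<Longrightarrow> int_comb P k = int_comb P l"
  unfolding int_comb_def by (rule sum.cong) auto

lemma int_comb_zero [simp]: "int_comb P (\<lambda>_. 0) = 0"
  by (simp add: int_comb_def)

lemma int_comb_diff: "int_comb P (\<lambda>\<alpha>. k \<alpha> - l \<alpha>) = int_comb P k - int_comb P l"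
  by (simp add: int_comb_def sum_subtractf scaleR_diff_left)

lemma int_comb_uminus: "int_comb P (\<lambda>\<alpha>. - k \<alpha>) = - int_comb P k"
  by (simp add: int_comb_def sum_negf)

lemma int_comb_update:
  assumes "finite P" "\<alpha> \<in> P"
  shows "int_comb P (k(\<alpha> := c)) = int_comb P k + of_int (c - k \<alpha>) *\<^sub>R \<alpha>"
proof -
  have "int_comb P (k(\<alpha> := c)) - int_comb P k = int_comb P (\<lambda>\<beta>. (k(\<alpha> := c)) \<beta> - k \<beta>)"
    by (rule int_comb_diff[symmetric])
  also have "\<dots> = (\<Sum>\<beta>\<in>P. if \<beta> = \<alpha> then of_int (c - k \<alpha>) *\<^sub>R \<beta> else 0)"
    unfolding int_comb_def by (rule sum.cong) auto
  also have "\<dots> = of_int (c - k \<alpha>) *\<^sub>R \<alpha>"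
    using assms by simp
  finally show ?thesis by (simp add: algebra_simps)
qed

lemma inner_int_comb_left: "int_comb P k \<bullet> v = (\<Sum>\<alpha>\<in>P. of_int (k \<alpha>) * (\<alpha> \<bullet> v))"
  by (simp add: int_comb_def inner_sum_left)

lemma int_comb_inner_nonpos:
  assumes "\<And>\<alpha>. \<alpha> \<in> P \<Longrightarrow> 0 \<le> k \<alpha>" and "\<And>\<alpha>. \<alpha> \<in> P \<Longrightarrow> 0 < k \<alpha> \<Longrightarrow> \<alpha> \<bullet> v \<le> 0"
  shows "int_comb P k \<bullet> v \<le> 0"
  unfolding inner_int_comb_left
proof (rule sum_nonpos)
  fix \<alpha> assume "\<alpha> \<in> P"
  show "of_int (k \<alpha>) * (\<alpha> \<bullet> v) \<le> 0"
  proof (cases "0 < k \<alpha>")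
    case True
    then show ?thesis using assms \<open>\<alpha> \<in> P\<close> by (intro mult_nonneg_nonpos) auto
  next
    case False
    then have "k \<alpha> = 0" using assms(1)[OF \<open>\<alpha> \<in> P\<close>] by linarith
    then show ?thesis by simp
  qed
qed

lemma root_coeff_int_comb:
  fixes P :: "'a::euclidean_space set"
  assumes "independent P" "\<alpha> \<in> P"
  shows "root_coeff P (int_comb P k) \<alpha> = of_int (k \<alpha>)"
proof -
  have "root_coeff P (int_comb P k) \<alpha> = (\<Sum>\<beta>\<in>P. of_int (k \<beta>) * representation P \<beta> \<alpha>)"
    unfolding root_coeff_def int_comb_def using assms(1)
    by (simp add: representation_sum representation_scale span_base span_scale)
  also have "\<dots> = (\<Sum>\<beta>\<in>P. if \<beta> = \<alpha> then of_int (k \<alpha>) else 0)"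
    using assms(1) by (intro sum.cong) (auto simp: representation_basis)
  also have "\<dots> = of_int (k \<alpha>)"
    using assms(2) independent_imp_finite[OF assms(1)] by simp
  finally show ?thesis .
qed

lemma int_comb_eq_iff:
  fixes P :: "'a::euclidean_space set"
  assumes "independent P"
  shows "int_comb P k = int_comb P l \<longleftrightarrow> (\<forall>\<alpha>\<in>P. k \<alpha> = l \<alpha>)"
  using root_coeff_int_comb[OF assms] int_comb_cong by (metis of_int_eq_iff)

lemma int_comb_eq_0_iff:
  fixes P :: "'a::euclidean_space set"
  assumes "independent P"
  shows "int_comb P k = 0 \<longleftrightarrow> (\<forall>\<alpha>\<in>P. k \<alpha> = 0)"
  using int_comb_eq_iff[OF assms, of k "\<lambda>_. 0"] by simp

lemma nat_comb_iff_int_comb: "nat_comb P v \<longleftrightarrow> (\<exists>k. (\<forall>\<alpha>\<in>P. 0 \<le> k \<alpha>) \<and> v = int_comb P k)"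
proof
  assume "nat_comb P v"
  then obtain c where "v = (\<Sum>\<alpha>\<in>P. of_nat (c \<alpha>) *\<^sub>R \<alpha>)" unfolding nat_comb_def by blast
  then have "v = int_comb P (\<lambda>\<alpha>. int (c \<alpha>))" by (simp add: int_comb_def)
  then show "\<exists>k. (\<forall>\<alpha>\<in>P. 0 \<le> k \<alpha>) \<and> v = int_comb P k"
    by (intro exI[of _ "\<lambda>\<alpha>. int (c \<alpha>)"]) simp
next
  assume "\<exists>k. (\<forall>\<alpha>\<in>P. 0 \<le> k \<alpha>) \<and> v = int_comb P k"
  then obtain k where k: "\<forall>\<alpha>\<in>P. 0 \<le> k \<alpha>" "v = int_comb P k" by blast
  then have "v = (\<Sum>\<alpha>\<in>P. of_nat (nat (k \<alpha>)) *\<^sub>R \<alpha>)"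
    unfolding int_comb_def by (auto intro: sum.cong)
  then show "nat_comb P v" unfolding nat_comb_def by (auto intro!: exI[of _ "\<lambda>\<alpha>. nat (k \<alpha>)"])
qed

lemma root_le_int_comb_iff:
  fixes P :: "'a::euclidean_space set"
  assumes "independent P"
  shows "root_le P (int_comb P k) (int_comb P l) \<longleftrightarrow> (\<forall>\<alpha>\<in>P. k \<alpha> \<le> l \<alpha>)"
proof -
  have "root_le P (int_comb P k) (int_comb P l) \<longleftrightarrow>
      (\<exists>m. (\<forall>\<alpha>\<in>P. 0 \<le> m \<alpha>) \<and> int_comb P (\<lambda>\<alpha>. l \<alpha> - k \<alpha>) = int_comb P m)"
    unfolding root_le_def nat_comb_iff_int_comb int_comb_diff by auto
  also have "\<dots> \<longleftrightarrow> (\<forall>\<alpha>\<in>P. k \<alpha> \<le> l \<alpha>)"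
    unfolding int_comb_eq_iff[OF assms] by (force intro!: exI[of _ "\<lambda>\<alpha>. l \<alpha> - k \<alpha>"])
  finally show ?thesis .
qed

lemma Ints_pos_mult_less_4:
  fixes a b :: real
  assumes "a \<in> \<int>" "b \<in> \<int>" "0 < a" "0 < b" "a * b < 4"
  shows "a = 1 \<or> b = 1"
proof -
  obtain i j where ij: "a = of_int i" "b = of_int j"
    using assms(1,2) by (auto elim!: Ints_cases)
  have "0 < i" "0 < j" "i * j < 4"
    using assms(3-5) unfolding ij by (simp_all flip: of_int_mult)
  moreover have "2 * 2 \<le> i * j" if "2 \<le> i" "2 \<le> j"
    using that by (intro mult_mono) auto
  ultimately have "i = 1 \<or> j = 1" by linarith
  then show ?thesis unfolding ij by auto
qed

locale root_base =
  fixes R P :: "'a::euclidean_space set"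
  assumes root_system: "root_system R" and reduced: "reduced_root_system R"
    and base: "is_base R P"
begin

lemma independent_P: "independent P"
  using base unfolding is_base_def by blast

lemma finite_P: "finite P"
  using independent_P by (rule independent_imp_finite)

lemma P_subset_R: "P \<subseteq> R"
  using base unfolding is_base_def by blast

lemma zero_notin_R: "0 \<notin> R"
  using root_system unfolding root_system_def by blast

lemma root_reflection:
  assumes "\<alpha> \<in> R" "\<beta> \<in> R"
  shows "\<beta> - cartan_int \<beta> \<alpha> *\<^sub>R \<alpha> \<in> R" and "cartan_int \<beta> \<alpha> \<in> \<int>"
  using root_system assms unfolding root_system_def by blast+

lemma root_uminus:
  assumes "\<alpha> \<in> R"
  shows "- \<alpha> \<in> R"
proof -
  have "\<alpha> \<noteq> 0" using assms zero_notin_R by blast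
  then have "cartan_int \<alpha> \<alpha> = 2" by (simp add: cartan_int_def)
  then show ?thesis using root_reflection(1)[OF assms assms] by (simp add: scaleR_2)
qed

lemma cartan_int_mult_less_4:
  assumes "\<alpha> \<in> R" "\<beta> \<in> R" "0 < \<beta> \<bullet> \<alpha>" "\<beta> \<noteq> \<alpha>"
  shows "cartan_int \<beta> \<alpha> * cartan_int \<alpha> \<beta> < 4"
proof -
  have a0: "0 < \<alpha> \<bullet> \<alpha>" and b0: "0 < \<beta> \<bullet> \<beta>"
    using assms(1,2) zero_notin_R by auto
  define t where "t = (\<beta> \<bullet> \<alpha>) / (\<alpha> \<bullet> \<alpha>)"
  have "\<beta> \<noteq> t *\<^sub>R \<alpha>"
  proof
    assume "\<beta> = t *\<^sub>R \<alpha>"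
    moreover have "0 < t" unfolding t_def using assms(3) a0 by simp
    ultimately show False
      using reduced assms(1,2,4) unfolding reduced_root_system_def by force
  qed
  then have "0 < (\<beta> - t *\<^sub>R \<alpha>) \<bullet> (\<beta> - t *\<^sub>R \<alpha>)" by simp
  also have "\<dots> = \<beta> \<bullet> \<beta> - (\<beta> \<bullet> \<alpha>)\<^sup>2 / (\<alpha> \<bullet> \<alpha>)"
    using a0 unfolding t_def
    by (simp add: inner_diff_left inner_diff_right inner_commute power2_eq_square field_simps)
  finally have "(\<beta> \<bullet> \<alpha>)\<^sup>2 < (\<alpha> \<bullet> \<alpha>) * (\<beta> \<bullet> \<beta>)"
    using a0 by (simp add: field_simps)
  then show ?thesis
    using a0 b0 by (simp add: cartan_int_def inner_commute power2_eq_square field_simps)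
qed

lemma root_diff_if_inner_pos:
  assumes "\<alpha> \<in> R" "\<beta> \<in> R" "0 < \<beta> \<bullet> \<alpha>" "\<beta> \<noteq> \<alpha>"
  shows "\<beta> - \<alpha> \<in> R"
proof -
  have "0 < \<alpha> \<bullet> \<alpha>" "0 < \<beta> \<bullet> \<beta>"
    using assms(1,2) zero_notin_R by auto
  then have "0 < cartan_int \<beta> \<alpha>" "0 < cartan_int \<alpha> \<beta>"
    using assms(3) by (simp_all add: cartan_int_def inner_commute)
  then have "cartan_int \<beta> \<alpha> = 1 \<or> cartan_int \<alpha> \<beta> = 1"
    using Ints_pos_mult_less_4 root_reflection(2) cartan_int_mult_less_4 assms by blast
  then show ?thesis
  proof
    assume "cartan_int \<beta> \<alpha> = 1"
    then show ?thesis using root_reflection(1)[OF assms(1,2)] by simp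
  next
    assume "cartan_int \<alpha> \<beta> = 1"
    then have "\<alpha> - \<beta> \<in> R" using root_reflection(1)[OF assms(2,1)] by simp
    then show ?thesis using root_uminus[of "\<alpha> - \<beta>"] by simp
  qed
qed

lemma root_add_if_inner_neg:
  assumes "\<alpha> \<in> R" "\<beta> \<in> R" "\<beta> \<bullet> \<alpha> < 0" "\<beta> \<noteq> - \<alpha>"
  shows "\<beta> + \<alpha> \<in> R"
  using root_diff_if_inner_pos[of "- \<alpha>" \<beta>] root_uminus assms by auto

lemma root_coeffs_same_sign:
  assumes "int_comb P k \<in> R"
  shows "(\<forall>\<alpha>\<in>P. 0 \<le> k \<alpha>) \<or> (\<forall>\<alpha>\<in>P. k \<alpha> \<le> 0)"
proof -
  obtain c where "int_comb P k = int_comb P c" and "(\<forall>\<alpha>\<in>P. 0 \<le> c \<alpha>) \<or> (\<forall>\<alpha>\<in>P. c \<alpha> \<le> 0)"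
    using base assms unfolding is_base_def int_comb_def by blast
  then show ?thesis using int_comb_eq_iff[OF independent_P] by metis
qed

lemma root_has_nonzero_coeff:
  assumes "int_comb P k \<in> R"
  obtains \<alpha> where "\<alpha> \<in> P" "k \<alpha> \<noteq> 0"
  using assms zero_notin_R int_comb_eq_0_iff[OF independent_P] by metis

lemma int_comb_simple: "\<alpha> \<in> P \<Longrightarrow> int_comb P ((\<lambda>_. 0)(\<alpha> := c)) = of_int c *\<^sub>R \<alpha>"
  using finite_P by (simp add: int_comb_update)

lemma simple_roots_inner_nonpos:
  assumes "\<alpha> \<in> P" "\<beta> \<in> P" "\<alpha> \<noteq> \<beta>"
  shows "\<alpha> \<bullet> \<beta> \<le> 0"
proof (rule ccontr)
  assume "\<not> \<alpha> \<bullet> \<beta> \<le> 0"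
  then have "\<alpha> - \<beta> \<in> R"
    using root_diff_if_inner_pos[of \<beta> \<alpha>] assms P_subset_R by auto
  moreover have "\<alpha> - \<beta> = int_comb P ((\<lambda>_. 0)(\<alpha> := 1, \<beta> := -1))"
    using assms finite_P by (simp add: int_comb_update)
  ultimately show False
    using root_coeffs_same_sign assms by force
qed

lemma incomparable_roots_inner_nonpos:
  assumes "int_comb P k \<in> R" "int_comb P l \<in> R"
    and "\<alpha> \<in> P" "l \<alpha> < k \<alpha>" "\<beta> \<in> P" "k \<beta> < l \<beta>"
  shows "int_comb P k \<bullet> int_comb P l \<le> 0"
proof (rule ccontr)
  assume "\<not> ?thesis"
  moreover have "int_comb P k \<noteq> int_comb P l"
    using assms(3,4) int_comb_eq_iff[OF independent_P] by force
  ultimately have "int_comb P (\<lambda>\<gamma>. k \<gamma> - l \<gamma>) \<in> R"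
    using root_diff_if_inner_pos assms(1,2) by (simp add: int_comb_diff)
  then show False
    using root_coeffs_same_sign assms(3-6) by fastforce
qed

(* Let x, y be the positive and negative parts of k - l and M the coefficientwise maximum, so
   that the two roots are M - y and M - x. If no such simple root exists, then (x, M - y) <= 0
   and (y, M - x) <= 0; together with (x, y) <= 0 this gives (M - y, M - x) >= (M, M) - (x, y) > 0,
   contradicting incomparable_roots_inner_nonpos. *)
lemma exists_descent_direction:
  assumes k: "int_comb P k \<in> R" and l: "int_comb P l \<in> R"
    and "\<alpha>1 \<in> P" "l \<alpha>1 < k \<alpha>1" "\<alpha>2 \<in> P" "k \<alpha>2 < l \<alpha>2"
    and "\<alpha>0 \<in> P" "max (k \<alpha>0) (l \<alpha>0) \<noteq> 0"
  shows "\<exists>\<alpha>\<in>P. l \<alpha> < k \<alpha> \<and> 0 < int_comb P k \<bullet> \<alpha> \<or> k \<alpha> < l \<alpha> \<and> 0 < int_comb P l \<bullet> \<alpha>"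
proof (rule ccontr)
  assume none: "\<not> ?thesis"
  define x where "x = int_comb P (\<lambda>\<alpha>. max (k \<alpha> - l \<alpha>) 0)"
  define y where "y = int_comb P (\<lambda>\<alpha>. max (l \<alpha> - k \<alpha>) 0)"
  define M where "M = int_comb P (\<lambda>\<alpha>. max (k \<alpha>) (l \<alpha>))"
  have k_eq: "int_comb P k = M - y"
    unfolding M_def y_def int_comb_diff[symmetric] by (rule int_comb_cong) (simp add: max_def)
  have l_eq: "int_comb P l = M - x"
    unfolding M_def x_def int_comb_diff[symmetric] by (rule int_comb_cong) (simp add: max_def)
  have xk: "x \<bullet> int_comb P k \<le> 0"
    unfolding x_def by (rule int_comb_inner_nonpos) (use none in \<open>auto simp: inner_commute\<close>)
  have yl: "y \<bullet> int_comb P l \<le> 0"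
    unfolding y_def by (rule int_comb_inner_nonpos) (use none in \<open>auto simp: inner_commute\<close>)
  have xy: "x \<bullet> y \<le> 0"
    unfolding x_def
  proof (rule int_comb_inner_nonpos)
    fix \<alpha> assume "\<alpha> \<in> P" "0 < max (k \<alpha> - l \<alpha>) 0"
    then show "\<alpha> \<bullet> y \<le> 0"
      unfolding y_def inner_commute[of \<alpha>]
      by (intro int_comb_inner_nonpos) (auto intro: simple_roots_inner_nonpos)
  qed simp
  have "M \<noteq> 0"
    unfolding M_def int_comb_eq_0_iff[OF independent_P] using assms(7,8) by blast
  then have MM: "0 < M \<bullet> M" by simp
  have "int_comb P k \<bullet> int_comb P l \<le> 0"
    using incomparable_roots_inner_nonpos[OF k l assms(3-6)] .
  moreover have "int_comb P k \<bullet> int_comb P l = M \<bullet> M - M \<bullet> x - M \<bullet> y + x \<bullet> y"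
    and "x \<bullet> int_comb P k = M \<bullet> x - x \<bullet> y" and "y \<bullet> int_comb P l = M \<bullet> y - x \<bullet> y"
    unfolding k_eq l_eq by (simp_all add: inner_diff_left inner_diff_right inner_commute)
  ultimately show False
    using xk yl xy MM by linarith
qed

lemma exists_ascent_direction:
  assumes "int_comb P k \<in> R" "int_comb P l \<in> R"
    and "\<alpha>1 \<in> P" "l \<alpha>1 < k \<alpha>1" "\<alpha>2 \<in> P" "k \<alpha>2 < l \<alpha>2"
    and "\<alpha>0 \<in> P" "min (k \<alpha>0) (l \<alpha>0) \<noteq> 0"
  shows "\<exists>\<alpha>\<in>P. k \<alpha> < l \<alpha> \<and> int_comb P k \<bullet> \<alpha> < 0 \<or> l \<alpha> < k \<alpha> \<and> int_comb P l \<bullet> \<alpha> < 0"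
proof -
  have "int_comb P (\<lambda>\<alpha>. - k \<alpha>) \<in> R" "int_comb P (\<lambda>\<alpha>. - l \<alpha>) \<in> R"
    using assms(1,2) root_uminus by (simp_all add: int_comb_uminus)
  moreover have "- l \<alpha>2 < - k \<alpha>2" "- k \<alpha>1 < - l \<alpha>1" "max (- k \<alpha>0) (- l \<alpha>0) \<noteq> 0"
    using assms(4,6,8) by (simp_all flip: minus_min_eq_max)
  ultimately show ?thesis
    using exists_descent_direction[of "\<lambda>\<alpha>. - k \<alpha>" "\<lambda>\<alpha>. - l \<alpha>" \<alpha>2 \<alpha>1 \<alpha>0] assms(3,5,7)
    by (auto simp: int_comb_uminus)
qed

lemma root_lower_step:
  assumes "int_comb P k \<in> R" "\<alpha> \<in> P" "0 < int_comb P k \<bullet> \<alpha>" "l \<alpha> < k \<alpha>"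
    and "\<alpha>0 \<in> P" "0 < k \<alpha>0" "0 < l \<alpha>0"
  shows "int_comb P (k(\<alpha> := k \<alpha> - 1)) \<in> R" and "0 < (k(\<alpha> := k \<alpha> - 1)) \<alpha>0"
proof -
  have "int_comb P k \<noteq> \<alpha>"
  proof
    assume "int_comb P k = \<alpha>"
    then have "int_comb P k = int_comb P ((\<lambda>_. 0)(\<alpha> := 1))"
      using int_comb_simple[OF assms(2)] by simp
    then have "\<forall>\<beta>\<in>P. k \<beta> = ((\<lambda>_. 0)(\<alpha> := 1)) \<beta>"
      using int_comb_eq_iff[OF independent_P] by blast
    then show False using assms(2,4-7) by (cases "\<alpha>0 = \<alpha>") auto
  qed
  then have "int_comb P k - \<alpha> \<in> R"
    using root_diff_if_inner_pos assms(1-3) P_subset_R by blast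
  then show "int_comb P (k(\<alpha> := k \<alpha> - 1)) \<in> R"
    using assms(2) finite_P by (simp add: int_comb_update)
  show "0 < (k(\<alpha> := k \<alpha> - 1)) \<alpha>0"
    using assms(4,6,7) by auto
qed

lemma root_raise_step:
  assumes "int_comb P k \<in> R" "\<alpha> \<in> P" "int_comb P k \<bullet> \<alpha> < 0"
    and "\<alpha>0 \<in> P" "0 < k \<alpha>0"
  shows "int_comb P (k(\<alpha> := k \<alpha> + 1)) \<in> R" and "0 < (k(\<alpha> := k \<alpha> + 1)) \<alpha>0"
proof -
  have "int_comb P k \<noteq> - \<alpha>"
  proof
    assume "int_comb P k = - \<alpha>"
    then have "int_comb P k = int_comb P ((\<lambda>_. 0)(\<alpha> := -1))"
      using int_comb_simple[OF assms(2)] by simp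
    then have "\<forall>\<beta>\<in>P. k \<beta> = ((\<lambda>_. 0)(\<alpha> := -1)) \<beta>"
      using int_comb_eq_iff[OF independent_P] by blast
    then show False using assms(4,5) by (cases "\<alpha>0 = \<alpha>") auto
  qed
  then have "int_comb P k + \<alpha> \<in> R"
    using root_add_if_inner_neg assms(1-3) P_subset_R by blast
  then show "int_comb P (k(\<alpha> := k \<alpha> + 1)) \<in> R"
    using assms(2) finite_P by (simp add: int_comb_update)
  show "0 < (k(\<alpha> := k \<alpha> + 1)) \<alpha>0"
    using assms(5) by auto
qed

lemma int_comb_min_root:
  assumes "int_comb P k \<in> R" "int_comb P l \<in> R" "\<alpha>0 \<in> P" "0 < k \<alpha>0" "0 < l \<alpha>0"
  shows "int_comb P (\<lambda>\<alpha>. min (k \<alpha>) (l \<alpha>)) \<in> R"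
proof -
  let ?S = "\<lambda>k. int_comb P k \<in> R \<and> 0 < k \<alpha>0"
  have "?S (\<lambda>\<alpha>. min (k \<alpha>) (l \<alpha>))"
  proof (rule min_closed_by_descent[where I = P])
    show "?S k'" if "?S k" "\<forall>\<alpha>\<in>P. k' \<alpha> = k \<alpha>" for k k'
      using that int_comb_cong[of P k' k] \<open>\<alpha>0 \<in> P\<close> by auto
    show "\<exists>\<alpha>\<in>P. l \<alpha> < k \<alpha> \<and> ?S (k(\<alpha> := k \<alpha> - 1)) \<or> k \<alpha> < l \<alpha> \<and> ?S (l(\<alpha> := l \<alpha> - 1))"
      if k: "?S k" and l: "?S l"
        and incomparable: "\<exists>\<alpha>\<in>P. l \<alpha> < k \<alpha>" "\<exists>\<alpha>\<in>P. k \<alpha> < l \<alpha>" for k l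
    proof -
      obtain \<alpha>1 \<alpha>2 where "\<alpha>1 \<in> P" "l \<alpha>1 < k \<alpha>1" "\<alpha>2 \<in> P" "k \<alpha>2 < l \<alpha>2"
        using incomparable by blast
      moreover have "max (k \<alpha>0) (l \<alpha>0) \<noteq> 0" using k by (auto simp: max_def)
      ultimately obtain \<alpha> where "\<alpha> \<in> P"
        and "l \<alpha> < k \<alpha> \<and> 0 < int_comb P k \<bullet> \<alpha> \<or> k \<alpha> < l \<alpha> \<and> 0 < int_comb P l \<bullet> \<alpha>"
        using exists_descent_direction[of k l] k l \<open>\<alpha>0 \<in> P\<close> by blast
      then show ?thesis
        using root_lower_step[of k \<alpha> l \<alpha>0] root_lower_step[of l \<alpha> k \<alpha>0] k l \<open>\<alpha>0 \<in> P\<close> by blast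
    qed
  qed (use assms finite_P in auto)
  then show ?thesis by simp
qed

lemma int_comb_max_root:
  assumes "int_comb P k \<in> R" "int_comb P l \<in> R" "\<alpha>0 \<in> P" "0 < k \<alpha>0" "0 < l \<alpha>0"
  shows "int_comb P (\<lambda>\<alpha>. max (k \<alpha>) (l \<alpha>)) \<in> R"
proof -
  let ?S = "\<lambda>k. int_comb P k \<in> R \<and> 0 < k \<alpha>0"
  have "?S (\<lambda>\<alpha>. max (k \<alpha>) (l \<alpha>))"
  proof (rule max_closed_by_ascent[where I = P])
    show "?S k'" if "?S k" "\<forall>\<alpha>\<in>P. k' \<alpha> = k \<alpha>" for k k'
      using that int_comb_cong[of P k' k] \<open>\<alpha>0 \<in> P\<close> by auto
    show "\<exists>\<alpha>\<in>P. k \<alpha> < l \<alpha> \<and> ?S (k(\<alpha> := k \<alpha> + 1)) \<or> l \<alpha> < k \<alpha> \<and> ?S (l(\<alpha> := l \<alpha> + 1))"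
      if k: "?S k" and l: "?S l"
        and incomparable: "\<exists>\<alpha>\<in>P. l \<alpha> < k \<alpha>" "\<exists>\<alpha>\<in>P. k \<alpha> < l \<alpha>" for k l
    proof -
      obtain \<alpha>1 \<alpha>2 where "\<alpha>1 \<in> P" "l \<alpha>1 < k \<alpha>1" "\<alpha>2 \<in> P" "k \<alpha>2 < l \<alpha>2"
        using incomparable by blast
      moreover have "min (k \<alpha>0) (l \<alpha>0) \<noteq> 0" using k l by (auto simp: min_def)
      ultimately obtain \<alpha> where "\<alpha> \<in> P"
        and "k \<alpha> < l \<alpha> \<and> int_comb P k \<bullet> \<alpha> < 0 \<or> l \<alpha> < k \<alpha> \<and> int_comb P l \<bullet> \<alpha> < 0"
        using exists_ascent_direction[of k l] k l \<open>\<alpha>0 \<in> P\<close> by blast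
      then show ?thesis
        using root_raise_step[of k \<alpha> \<alpha>0] root_raise_step[of l \<alpha> \<alpha>0] k l \<open>\<alpha>0 \<in> P\<close> by blast
    qed
  qed (use assms finite_P in auto)
  then show ?thesis by simp
qed

lemma pos_roots_iff: "\<gamma> \<in> pos_roots R P \<longleftrightarrow> \<gamma> \<in> R \<and> (\<exists>k. (\<forall>\<alpha>\<in>P. 0 \<le> k \<alpha>) \<and> \<gamma> = int_comb P k)"
  unfolding pos_roots_def nat_comb_iff_int_comb by blast

lemma root_le_iff_root_coeff_le:
  assumes "x \<in> pos_roots R P" "y \<in> pos_roots R P"
  shows "root_le P x y \<longleftrightarrow> (\<forall>\<alpha>\<in>P. root_coeff P x \<alpha> \<le> root_coeff P y \<alpha>)"
  using assms
  by (auto simp: pos_roots_iff root_le_int_comb_iff[OF independent_P]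
      root_coeff_int_comb[OF independent_P])

lemma root_le_antisym:
  assumes "x \<in> pos_roots R P" "y \<in> pos_roots R P" "root_le P x y" "root_le P y x"
  shows "x = y"
  using assms
  by (auto simp: pos_roots_iff root_le_int_comb_iff[OF independent_P]
      int_comb_eq_iff[OF independent_P]) (meson order_antisym)

lemma pointwise_embedding_pos_roots:
  assumes "S \<subseteq> pos_roots R P"
  shows "pointwise_embedding (root_le P) S P (root_coeff P)"
  using assms root_le_iff_root_coeff_le by unfold_locales blast

lemma root_coeff_int_comb_min:
  "\<alpha> \<in> P \<Longrightarrow> root_coeff P (int_comb P (\<lambda>\<beta>. min (k \<beta>) (l \<beta>))) \<alpha>
     = min (root_coeff P (int_comb P k) \<alpha>) (root_coeff P (int_comb P l) \<alpha>)"
  by (simp add: root_coeff_int_comb[OF independent_P] of_int_min)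

lemma root_coeff_int_comb_max:
  "\<alpha> \<in> P \<Longrightarrow> root_coeff P (int_comb P (\<lambda>\<beta>. max (k \<beta>) (l \<beta>))) \<alpha>
     = max (root_coeff P (int_comb P k) \<alpha>) (root_coeff P (int_comb P l) \<alpha>)"
  by (simp add: root_coeff_int_comb[OF independent_P] of_int_max)

lemma is_modular_lattice_on_pos_roots_above:
  assumes "\<gamma> \<in> pos_roots R P"
  shows "is_modular_lattice_on (root_le P) {\<nu> \<in> pos_roots R P. root_le P \<gamma> \<nu>}"
proof -
  let ?U = "{\<nu> \<in> pos_roots R P. root_le P \<gamma> \<nu>}"
  obtain g where g: "\<gamma> = int_comb P g" "int_comb P g \<in> R" "\<forall>\<alpha>\<in>P. 0 \<le> g \<alpha>"
    using assms pos_roots_iff by auto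
  obtain \<alpha>0 where "\<alpha>0 \<in> P" "g \<alpha>0 \<noteq> 0"
    by (rule root_has_nonzero_coeff[OF g(2)])
  then have "0 < g \<alpha>0" using g(3) by (simp add: order_less_le)
  have U: "x \<in> ?U \<longleftrightarrow> (\<exists>k. x = int_comb P k \<and> int_comb P k \<in> R \<and> (\<forall>\<alpha>\<in>P. g \<alpha> \<le> k \<alpha>))" for x
  proof
    assume "x \<in> ?U"
    then obtain k where "x = int_comb P k" "int_comb P k \<in> R" "root_le P \<gamma> x"
      by (auto simp: pos_roots_iff)
    then show "\<exists>k. x = int_comb P k \<and> int_comb P k \<in> R \<and> (\<forall>\<alpha>\<in>P. g \<alpha> \<le> k \<alpha>)"
      using g(1) by (auto simp: root_le_int_comb_iff[OF independent_P])
  next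
    assume "\<exists>k. x = int_comb P k \<and> int_comb P k \<in> R \<and> (\<forall>\<alpha>\<in>P. g \<alpha> \<le> k \<alpha>)"
    then obtain k where k: "x = int_comb P k" "int_comb P k \<in> R" "\<forall>\<alpha>\<in>P. g \<alpha> \<le> k \<alpha>"
      by blast
    moreover have "\<forall>\<alpha>\<in>P. 0 \<le> k \<alpha>"
      using g(3) k(3) by (meson order_trans)
    ultimately show "x \<in> ?U"
      using g(1) by (auto simp: pos_roots_iff root_le_int_comb_iff[OF independent_P])
  qed
  interpret pointwise_embedding "root_le P" ?U P "root_coeff P"
    by (rule pointwise_embedding_pos_roots) blast
  show ?thesis
  proof (rule is_modular_lattice_on_pointwise)
    show "x = y" if "x \<in> ?U" "y \<in> ?U" "root_le P x y" "root_le P y x" for x y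
      using that root_le_antisym by blast
    fix x y assume "x \<in> ?U" "y \<in> ?U"
    then obtain kx ky
      where kx: "x = int_comb P kx" "int_comb P kx \<in> R" "\<forall>\<alpha>\<in>P. g \<alpha> \<le> kx \<alpha>"
        and ky: "y = int_comb P ky" "int_comb P ky \<in> R" "\<forall>\<alpha>\<in>P. g \<alpha> \<le> ky \<alpha>"
      unfolding U by blast
    have "0 < kx \<alpha>0" "0 < ky \<alpha>0"
      using kx(3) ky(3) \<open>\<alpha>0 \<in> P\<close> \<open>0 < g \<alpha>0\<close> by fastforce+
    then have "int_comb P (\<lambda>\<alpha>. min (kx \<alpha>) (ky \<alpha>)) \<in> R" "int_comb P (\<lambda>\<alpha>. max (kx \<alpha>) (ky \<alpha>)) \<in> R"
      using int_comb_min_root int_comb_max_root kx(2) ky(2) \<open>\<alpha>0 \<in> P\<close> by blast+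
    then have "int_comb P (\<lambda>\<alpha>. min (kx \<alpha>) (ky \<alpha>)) \<in> ?U" "int_comb P (\<lambda>\<alpha>. max (kx \<alpha>) (ky \<alpha>)) \<in> ?U"
      unfolding U using kx(3) ky(3) by (fastforce simp: le_max_iff_disj)+
    then show "\<exists>z\<in>?U. \<forall>\<alpha>\<in>P. root_coeff P z \<alpha> = min (root_coeff P x \<alpha>) (root_coeff P y \<alpha>)"
      and "\<exists>z\<in>?U. \<forall>\<alpha>\<in>P. root_coeff P z \<alpha> = max (root_coeff P x \<alpha>) (root_coeff P y \<alpha>)"
      by (auto simp: kx(1) ky(1) root_coeff_int_comb_min root_coeff_int_comb_max)
  qed
qed

lemma root_supp_int_comb: "root_supp P (int_comb P k) = {\<alpha> \<in> P. k \<alpha> \<noteq> 0}"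
  by (auto simp: root_supp_def root_coeff_int_comb[OF independent_P])

lemma is_meet_in_pos_roots_min:
  assumes "\<gamma>1 \<in> pos_roots R P" "\<gamma>2 \<in> pos_roots R P"
    and "root_supp P \<gamma>1 \<inter> root_supp P \<gamma>2 \<noteq> {}"
  shows "is_meet_in (root_le P) (pos_roots R P) \<gamma>1 \<gamma>2
           (\<Sum>\<alpha>\<in>P. min (root_coeff P \<gamma>1 \<alpha>) (root_coeff P \<gamma>2 \<alpha>) *\<^sub>R \<alpha>)"
proof -
  obtain k1 k2 where k1: "\<gamma>1 = int_comb P k1" "int_comb P k1 \<in> R" "\<forall>\<alpha>\<in>P. 0 \<le> k1 \<alpha>"
    and k2: "\<gamma>2 = int_comb P k2" "int_comb P k2 \<in> R" "\<forall>\<alpha>\<in>P. 0 \<le> k2 \<alpha>"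
    using assms(1,2) pos_roots_iff by auto
  obtain \<alpha>0 where "\<alpha>0 \<in> P" "0 < k1 \<alpha>0" "0 < k2 \<alpha>0"
    using assms(3) k1 k2 by (force simp: root_supp_int_comb order_less_le)
  interpret pointwise_embedding "root_le P" "pos_roots R P" P "root_coeff P"
    by (rule pointwise_embedding_pos_roots) blast
  let ?m = "int_comb P (\<lambda>\<alpha>. min (k1 \<alpha>) (k2 \<alpha>))"
  have "?m \<in> pos_roots R P"
    using int_comb_min_root[OF k1(2) k2(2) \<open>\<alpha>0 \<in> P\<close>] \<open>0 < k1 \<alpha>0\<close> \<open>0 < k2 \<alpha>0\<close> k1(3) k2(3)
    by (auto simp: pos_roots_iff intro!: exI[of _ "\<lambda>\<alpha>. min (k1 \<alpha>) (k2 \<alpha>)"])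
  moreover have "(\<Sum>\<alpha>\<in>P. min (root_coeff P \<gamma>1 \<alpha>) (root_coeff P \<gamma>2 \<alpha>) *\<^sub>R \<alpha>)
      = (\<Sum>\<alpha>\<in>P. of_int (min (k1 \<alpha>) (k2 \<alpha>)) *\<^sub>R \<alpha>)"
    unfolding k1(1) k2(1)
    by (rule sum.cong) (simp_all add: root_coeff_int_comb[OF independent_P] of_int_min)
  ultimately show ?thesis
    using assms(1,2) k1(1) k2(1)
    by (auto intro: is_meet_in_pointwise_min simp: root_coeff_int_comb_min int_comb_def[symmetric])
qed

lemma common_support_if_is_meet_in_pos_roots:
  assumes "\<gamma>1 \<in> pos_roots R P" "\<gamma>2 \<in> pos_roots R P"
    and "is_meet_in (root_le P) (pos_roots R P) \<gamma>1 \<gamma>2 \<nu>"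
  shows "root_supp P \<gamma>1 \<inter> root_supp P \<gamma>2 \<noteq> {}"
proof -
  obtain k1 k2 where k1: "\<gamma>1 = int_comb P k1" and k2: "\<gamma>2 = int_comb P k2"
    using assms(1,2) pos_roots_iff by auto
  obtain k where k: "\<nu> = int_comb P k" "int_comb P k \<in> R" "\<forall>\<alpha>\<in>P. 0 \<le> k \<alpha>"
    and "root_le P \<nu> \<gamma>1" "root_le P \<nu> \<gamma>2"
    using assms(3) pos_roots_iff unfolding is_meet_in_def by auto
  then have "\<forall>\<alpha>\<in>P. k \<alpha> \<le> k1 \<alpha> \<and> k \<alpha> \<le> k2 \<alpha>"
    unfolding k1 k2 by (simp add: root_le_int_comb_iff[OF independent_P])
  moreover obtain \<alpha> where "\<alpha> \<in> P" "k \<alpha> \<noteq> 0"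
    using root_has_nonzero_coeff[OF k(2)] .
  ultimately have "\<alpha> \<in> root_supp P \<gamma>1 \<inter> root_supp P \<gamma>2"
    using k(3) unfolding k1 k2 root_supp_int_comb by force
  then show ?thesis by blast
qed

end

theorem theorem2p5:
  fixes R P :: "'a::euclidean_space set"
  assumes "root_system R" and "reduced_root_system R" and "irreducible_root_system R"
    and "is_base R P"
  shows "(\<forall>\<gamma>\<in>pos_roots R P.
            is_modular_lattice_on (root_le P) {\<nu>\<in>pos_roots R P. root_le P \<gamma> \<nu>})
       \<and> (\<forall>\<gamma>1\<in>pos_roots R P. \<forall>\<gamma>2\<in>pos_roots R P.
            ((\<exists>\<nu>. is_meet_in (root_le P) (pos_roots R P) \<gamma>1 \<gamma>2 \<nu>)
               \<longleftrightarrow> root_supp P \<gamma>1 \<inter> root_supp P \<gamma>2 \<noteq> {})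
          \<and> (root_supp P \<gamma>1 \<inter> root_supp P \<gamma>2 \<noteq> {} \<longrightarrow>
               is_meet_in (root_le P) (pos_roots R P) \<gamma>1 \<gamma>2
                 (\<Sum>\<alpha>\<in>P. min (root_coeff P \<gamma>1 \<alpha>) (root_coeff P \<gamma>2 \<alpha>) *\<^sub>R \<alpha>)))"
proof -
  interpret root_base R P
    using assms(1,2,4) by unfold_locales
  show ?thesis
  proof (intro conjI ballI impI)
    show "is_modular_lattice_on (root_le P) {\<nu>\<in>pos_roots R P. root_le P \<gamma> \<nu>}"
      if "\<gamma> \<in> pos_roots R P" for \<gamma>
      using that by (rule is_modular_lattice_on_pos_roots_above)
    fix \<gamma>1 \<gamma>2 assume \<gamma>: "\<gamma>1 \<in> pos_roots R P" "\<gamma>2 \<in> pos_roots R P"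
    show "(\<exists>\<nu>. is_meet_in (root_le P) (pos_roots R P) \<gamma>1 \<gamma>2 \<nu>)
        \<longleftrightarrow> root_supp P \<gamma>1 \<inter> root_supp P \<gamma>2 \<noteq> {}"
      using common_support_if_is_meet_in_pos_roots[OF \<gamma>] is_meet_in_pos_roots_min[OF \<gamma>] by blast
    show "is_meet_in (root_le P) (pos_roots R P) \<gamma>1 \<gamma>2
        (\<Sum>\<alpha>\<in>P. min (root_coeff P \<gamma>1 \<alpha>) (root_coeff P \<gamma>2 \<alpha>) *\<^sub>R \<alpha>)"
      if "root_supp P \<gamma>1 \<inter> root_supp P \<gamma>2 \<noteq> {}"
      using \<gamma> that by (rule is_meet_in_pos_roots_min)
  qed
qed

end
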